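(* Consider any run of Algorithm 1 (described in the context) under the standing assumption. For every $k\in\mathcal{K}$, if $k\in\mathcal{U}$ then $\delta_k>3(1-\eta)\epsilon_H/L_H$. Consequently, \[ \delta_k\ \ge\ \delta_{\min}:=\min\Big\{\delta_0,\ \tfrac{3\gamma_1(1-\eta)}{L_H}\,\epsilon_H\Big\}\in(0,\infty)\quad\text{for all }k\in\mathcal{K}. \]
   Context: Let $f:\mathbb{R}^n\to\mathbb{R}$ with gradient $g=\nabla f$ and Hessian $H=\nabla^2 f$; $\|\cdot\|$ is the Euclidean norm and $\lambda_{\min}(\cdot)$ the smallest eigenvalue of a symmetric matrix. Write $f_k=f(x_k)$, $g_k=g(x_k)$, $H_k=H(x_k)$ and $m_k(x):=f_k+g_k^T(x-x_k)+\tfrac12(x-x_k)^TH_k(x-x_k)$. Algorithm 1 (exact trust-region Newton method). Inputs: tolerances $\epsilon_g,\epsilon_H>0$; parameters $\gamma_1\in(0,1)$, $\gamma_2\in[1,\infty)$, $\psi\in(1/\gamma_2,1]$; $x_0\in\mathbb{R}^n$; $\delta_0>0$; $\delta_{\max}\ge\delta_0$; $\eta\in(0,1)$. For $k=0,1,2,\dots$: evaluate $g_k,H_k$; if $\|g_k\|\le\epsilon_g$, compute $\lambda_k=\lambda_{\min}(H_k)$ and, if $\lambda_k\ge-\epsilon_H$, return $x_k$ (terminate). Otherwise compute $s_k$ as a global solution of $\min_{s}\ m_k(x_k+s)+\tfrac12\epsilon_H\|s\|^2$ subject to $\|s\|\le\delta_k$. Set $\rho_k=\frac{f_k-f(x_k+s_k)}{m_k(x_k)-m_k(x_k+s_k)}$.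 If $\rho_k\ge\eta$: $x_{k+1}=x_k+s_k$, and $\delta_{k+1}=\min\{\gamma_2\delta_k,\delta_{\max}\}$ if $\|s_k\|\ge\psi\delta_k$, else $\delta_{k+1}=\delta_k$. If $\rho_k<\eta$: $x_{k+1}=x_k$ and $\delta_{k+1}=\gamma_1\|s_k\|$. $\mathcal{K}$ is the set of indices $k$ such that iteration $k$ is completed without termination; $\mathcal{U}=\{k\in\mathcal{K}:\rho_k<\eta\}$. Standing assumption: the sequence $\{f_k\}$ is bounded below by some $f_{\rm low}\in\mathbb{R}$, and all segments $[x_k,x_k+s_k]$ lie in an open set on which $f$ is twice continuously differentiable with gradient Lipschitz continuous with constant $L_g>0$ and Hessian Lipschitz continuous with constant $L_H>0$. *)

theory Defs
  imports "HOL-Analysis.Analysis"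
begin

text \<open>Real eigenvalues of a square matrix, and the smallest eigenvalue
  (meaningful for symmetric matrices, whose spectrum is real, finite and nonempty).\<close>
definition eigenvalues :: "real^'n^'n \<Rightarrow> real set" where
  "eigenvalues A = {\<mu>. \<exists>v. v \<noteq> 0 \<and> A *v v = \<mu> *\<^sub>R v}"

definition lambda_min :: "real^'n^'n \<Rightarrow> real" where
  "lambda_min A = Min (eigenvalues A)"

definition tr_model ::
  "(real^'n \<Rightarrow> real) \<Rightarrow> (real^'n \<Rightarrow> real^'n) \<Rightarrow> (real^'n \<Rightarrow> real^'n^'n)
     \<Rightarrow> real^'n \<Rightarrow> real^'n \<Rightarrow> real" where
  "tr_model f g H xk y = f xk + g xk \<bullet> (y - xk) + (1/2) * ((y - xk) \<bullet> (H xk *v (y - xk)))"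

definition tr_stop ::
  "(real^'n \<Rightarrow> real^'n) \<Rightarrow> (real^'n \<Rightarrow> real^'n^'n) \<Rightarrow> real \<Rightarrow> real \<Rightarrow> real^'n \<Rightarrow> bool" where
  "tr_stop g H eps_g eps_H xk \<longleftrightarrow> norm (g xk) \<le> eps_g \<and> lambda_min (H xk) \<ge> - eps_H"

definition tr_K ::
  "(real^'n \<Rightarrow> real^'n) \<Rightarrow> (real^'n \<Rightarrow> real^'n^'n) \<Rightarrow> real \<Rightarrow> real \<Rightarrow> (nat \<Rightarrow> real^'n) \<Rightarrow> nat set" where
  "tr_K g H eps_g eps_H x = {k. \<forall>j\<le>k. \<not> tr_stop g H eps_g eps_H (x j)}"

definition tr_rho ::
  "(real^'n \<Rightarrow> real) \<Rightarrow> (real^'n \<Rightarrow> real^'n) \<Rightarrow> (real^'n \<Rightarrow> real^'n^'n)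
     \<Rightarrow> real^'n \<Rightarrow> real^'n \<Rightarrow> real" where
  "tr_rho f g H xk sk = (f xk - f (xk + sk)) / (tr_model f g H xk xk - tr_model f g H xk (xk + sk))"

end

theory Submission
  imports Defs
begin

text \<open>
  An unsuccessful step s is long. It is nonzero: s = 0 would make 0 a minimiser of the
  regularised model on the ball, forcing g = 0 and H + eps_H I positive semidefinite, i.e. the
  stopping test (the Hessian is symmetric because it is Lipschitz, so lambda_min is meaningful).
  Beating the zero step, it decreases the model by at least eps_H |s|^2 / 2, while the Lipschitz
  Hessian gives f(x + s) <= m(x + s) + L_H |s|^3 / 6. If |s| <= 3 (1 - eta) eps_H / L_H, this
  cubic error is at most (1 - eta) times the model decrease, which forces rho >= eta.
  An unsuccessful iteration sets the radius to gamma_1 |s| and a successful one never lowers it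
  below min(delta_k, delta_max), so induction gives delta_k >= delta_min.
\<close>

section \<open>Calculus along segments\<close>

lemma le_linear_near_zero_imp_nonpos:
  fixes d C a :: real
  assumes "0 < a" "\<And>t. 0 < t \<Longrightarrow> t \<le> a \<Longrightarrow> d \<le> C * t"
  shows "d \<le> 0"
proof (rule tendsto_le[OF trivial_limit_at_right_real])
  show "((\<lambda>t. C * t) \<longlongrightarrow> 0) (at_right 0)"
    by (auto intro!: tendsto_eq_intros)
  show "((\<lambda>t. d) \<longlongrightarrow> d) (at_right 0)" by simp
  show "\<forall>\<^sub>F t in at_right 0. d \<le> C * t"
    unfolding eventually_at_right_field using assms by force
qed

lemma has_real_derivative_along_line:
  fixes F :: "'a::real_normed_vector \<Rightarrow> real"
  assumes "(F has_derivative D) (at (y + \<tau> *\<^sub>R w))"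
  shows "((\<lambda>t. F (y + t *\<^sub>R w)) has_real_derivative D w) (at \<tau>)"
proof -
  have "((\<lambda>t. y + t *\<^sub>R w) has_derivative (\<lambda>t. t *\<^sub>R w)) (at \<tau>)"
    by (auto intro!: derivative_eq_intros)
  from has_derivative_compose[OF this assms]
  have "((\<lambda>t. F (y + t *\<^sub>R w)) has_derivative (\<lambda>t. t * D w)) (at \<tau>)"
    using linear_scale[OF has_derivative_linear[OF assms]] by simp
  moreover have "(\<lambda>t. t * D w) = (*) (D w)" by (simp add: fun_eq_iff)
  ultimately show ?thesis
    by (simp add: has_field_derivative_def)
qed

lemma has_real_derivative_le_imp_le:
  fixes p q p' q' :: "real \<Rightarrow> real"
  assumes "0 \<le> t" "p 0 \<le> q 0"
    and "\<And>\<tau>. 0 \<le> \<tau> \<Longrightarrow> \<tau> \<le> t \<Longrightarrow> (p has_real_derivative p' \<tau>) (at \<tau>)"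
    and "\<And>\<tau>. 0 \<le> \<tau> \<Longrightarrow> \<tau> \<le> t \<Longrightarrow> (q has_real_derivative q' \<tau>) (at \<tau>)"
    and "\<And>\<tau>. 0 \<le> \<tau> \<Longrightarrow> \<tau> \<le> t \<Longrightarrow> p' \<tau> \<le> q' \<tau>"
  shows "p t \<le> q t"
proof -
  have "(\<lambda>\<tau>. q \<tau> - p \<tau>) 0 \<le> (\<lambda>\<tau>. q \<tau> - p \<tau>) t"
  proof (rule DERIV_nonneg_imp_nondecreasing[OF assms(1)])
    fix \<tau> assume \<tau>: "0 \<le> \<tau>" "\<tau> \<le> t"
    have "((\<lambda>\<tau>. q \<tau> - p \<tau>) has_real_derivative q' \<tau> - p' \<tau>) (at \<tau>)"
      using \<tau> assms(3,4) by (intro DERIV_diff)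
    moreover have "0 \<le> q' \<tau> - p' \<tau>" using \<tau> assms(5) by simp
    ultimately show "\<exists>y. ((\<lambda>\<tau>. q \<tau> - p \<tau>) has_real_derivative y) (at \<tau>) \<and> 0 \<le> y"
      by blast
  qed
  then show ?thesis using assms(2) by simp
qed

lemma cubic_bound_from_second_derivative:
  fixes \<theta> \<phi> \<phi>' :: "real \<Rightarrow> real"
  assumes "\<theta> 0 = 0" "\<phi> 0 = 0"
    and "\<And>\<tau>. 0 \<le> \<tau> \<Longrightarrow> \<tau> \<le> 1 \<Longrightarrow> (\<theta> has_real_derivative \<phi> \<tau>) (at \<tau>)"
    and "\<And>\<tau>. 0 \<le> \<tau> \<Longrightarrow> \<tau> \<le> 1 \<Longrightarrow> (\<phi> has_real_derivative \<phi>' \<tau>) (at \<tau>)"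
    and "\<And>\<tau>. 0 \<le> \<tau> \<Longrightarrow> \<tau> \<le> 1 \<Longrightarrow> \<phi>' \<tau> \<le> M * \<tau>"
  shows "\<theta> 1 \<le> M / 6"
proof -
  have square: "((\<lambda>t. M * t\<^sup>2 / 2) has_real_derivative M * t) (at t)" for t
    by (auto intro!: derivative_eq_intros)
  have cube: "((\<lambda>t. M * t ^ 3 / 6) has_real_derivative M * t\<^sup>2 / 2) (at t)" for t
    by (auto intro!: derivative_eq_intros)
  have "\<phi> t \<le> M * t\<^sup>2 / 2" if "0 \<le> t" "t \<le> 1" for t
    using that assms(2,4,5) square
    by (intro has_real_derivative_le_imp_le[of t \<phi> "\<lambda>t. M * t\<^sup>2 / 2" \<phi>' "\<lambda>t. M * t"]) auto
  then have "\<theta> 1 \<le> M * 1 ^ 3 / 6"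
    using assms(1,3) cube
    by (intro has_real_derivative_le_imp_le[of 1 \<theta> "\<lambda>t. M * t ^ 3 / 6" \<phi> "\<lambda>t. M * t\<^sup>2 / 2"]) auto
  then show ?thesis by simp
qed

lemma cubic_taylor_upper_bound:
  fixes f :: "real^'n \<Rightarrow> real" and g :: "real^'n \<Rightarrow> real^'n" and H :: "real^'n \<Rightarrow> real^'n^'n"
  assumes seg: "closed_segment x (x + s) \<subseteq> S"
    and grad: "\<And>y. y \<in> S \<Longrightarrow> (f has_derivative (\<lambda>h. g y \<bullet> h)) (at y)"
    and hess: "\<And>y. y \<in> S \<Longrightarrow> (g has_derivative (\<lambda>h. H y *v h)) (at y)"
    and LH: "\<And>y z. y \<in> S \<Longrightarrow> z \<in> S \<Longrightarrow> onorm (\<lambda>v. (H y - H z) *v v) \<le> L * norm (y - z)"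
  shows "f (x + s) \<le> f x + g x \<bullet> s + (1/2) * (s \<bullet> (H x *v s)) + L / 6 * norm s ^ 3"
proof -
  have inS: "x + \<tau> *\<^sub>R s \<in> S" if "0 \<le> \<tau>" "\<tau> \<le> 1" for \<tau>
  proof -
    have "x + \<tau> *\<^sub>R s = (1 - \<tau>) *\<^sub>R x + \<tau> *\<^sub>R (x + s)" by (simp add: algebra_simps)
    then have "x + \<tau> *\<^sub>R s \<in> closed_segment x (x + s)"
      using that unfolding in_segment(1) by blast
    then show ?thesis using seg by blast
  qed
  define c where "c = s \<bullet> (H x *v s)"
  define \<theta> where "\<theta> \<tau> = f (x + \<tau> *\<^sub>R s) - f x - \<tau> * (g x \<bullet> s) - \<tau>\<^sup>2 / 2 * c" for \<tau>
  define \<phi> where "\<phi> \<tau> = g (x + \<tau> *\<^sub>R s) \<bullet> s - g x \<bullet> s - \<tau> * c" for \<tau>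
  define \<phi>' where "\<phi>' \<tau> = (H (x + \<tau> *\<^sub>R s) *v s) \<bullet> s - c" for \<tau>
  have "\<theta> 1 \<le> L * norm s ^ 3 / 6"
  proof (rule cubic_bound_from_second_derivative[of \<theta> \<phi>])
    fix \<tau> :: real assume \<tau>: "0 \<le> \<tau>" "\<tau> \<le> 1"
    have "((\<lambda>t. f (x + t *\<^sub>R s)) has_real_derivative g (x + \<tau> *\<^sub>R s) \<bullet> s) (at \<tau>)"
      by (rule has_real_derivative_along_line[OF grad[OF inS[OF \<tau>]]])
    then show "(\<theta> has_real_derivative \<phi> \<tau>) (at \<tau>)"
      unfolding \<theta>_def \<phi>_def by (auto intro!: derivative_eq_intros simp: power2_eq_square)
    have "((\<lambda>t. g (x + t *\<^sub>R s) \<bullet> s) has_real_derivative (H (x + \<tau> *\<^sub>R s) *v s) \<bullet> s) (at \<tau>)"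
      by (rule has_real_derivative_along_line[OF has_derivative_inner_left[OF hess[OF inS[OF \<tau>]]]])
    then show "(\<phi> has_real_derivative \<phi>' \<tau>) (at \<tau>)"
      unfolding \<phi>_def \<phi>'_def by (auto intro!: derivative_eq_intros)
    have "\<phi>' \<tau> = ((H (x + \<tau> *\<^sub>R s) - H x) *v s) \<bullet> s"
      by (simp add: \<phi>'_def c_def matrix_vector_mult_diff_rdistrib inner_diff_left inner_diff_right inner_commute)
    also have "\<dots> \<le> norm ((H (x + \<tau> *\<^sub>R s) - H x) *v s) * norm s"
      by (rule norm_cauchy_schwarz)
    also have "\<dots> \<le> (onorm (\<lambda>v. (H (x + \<tau> *\<^sub>R s) - H x) *v v) * norm s) * norm s"
      by (intro mult_right_mono onorm[OF matrix_vector_mul_bounded_linear]) simp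
    also have "\<dots> \<le> (L * norm (x + \<tau> *\<^sub>R s - x) * norm s) * norm s"
      using inS[OF \<tau>] inS[of 0] by (intro mult_right_mono LH) auto
    also have "\<dots> = L * norm s ^ 3 * \<tau>"
      using \<tau> by (simp add: power3_eq_cube)
    finally show "\<phi>' \<tau> \<le> L * norm s ^ 3 * \<tau>" .
  qed (simp_all add: \<theta>_def \<phi>_def)
  then show ?thesis by (simp add: \<theta>_def c_def)
qed

lemma gradient_linearization_bound:
  fixes g :: "real^'n \<Rightarrow> real^'n" and H :: "real^'n \<Rightarrow> real^'n^'n"
  assumes ball: "cball x R \<subseteq> S" and y: "y \<in> cball x R" "y + v \<in> cball x R" and L: "0 \<le> L"
    and hess: "\<And>y. y \<in> S \<Longrightarrow> (g has_derivative (\<lambda>h. H y *v h)) (at y)"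
    and LH: "\<And>y z. y \<in> S \<Longrightarrow> z \<in> S \<Longrightarrow> onorm (\<lambda>v. (H y - H z) *v v) \<le> L * norm (y - z)"
  shows "norm (g (y + v) - g y - H x *v v) \<le> L * R * norm v"
proof -
  have x_in: "x \<in> cball x R"
    using y(1) by (auto intro: order_trans[OF zero_le_dist])
  have seg: "y + t *\<^sub>R (y + v - y) \<in> cball x R" if "t \<in> {0..1}" for t
  proof -
    have "(1 - t) *\<^sub>R y + t *\<^sub>R (y + v) \<in> cball x R"
      using that by (intro convexD_alt[OF convex_cball y]) auto
    moreover have "(1 - t) *\<^sub>R y + t *\<^sub>R (y + v) = y + t *\<^sub>R (y + v - y)"
      by (simp add: algebra_simps)
    ultimately show ?thesis by simp
  qed
  have deriv: "(g has_derivative (\<lambda>h. H z *v h)) (at z within cball x R)" if "z \<in> cball x R" for z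
    using hess[of z] that ball by (blast intro: has_derivative_at_withinI)
  have bound: "onorm ((\<lambda>h. H z *v h) - (\<lambda>h. H x *v h)) \<le> L * R" if "z \<in> cball x R" for z
  proof -
    have diff: "(\<lambda>h. H z *v h) - (\<lambda>h. H x *v h) = (\<lambda>h. (H z - H x) *v h)"
      by (simp add: fun_eq_iff matrix_vector_mult_diff_rdistrib)
    have "z \<in> S" "x \<in> S" using that x_in ball by auto
    then have "onorm ((\<lambda>h. H z *v h) - (\<lambda>h. H x *v h)) \<le> L * norm (z - x)"
      unfolding diff by (rule LH)
    also have "\<dots> \<le> L * R"
      using that L by (intro mult_left_mono) (simp_all add: dist_norm norm_minus_commute)
    finally show ?thesis .
  qed
  have "norm (g (y + v) - g y - H x *v (y + v - y)) \<le> norm (y + v - y) * (L * R)"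
    by (rule differentiable_bound_linearization[where f' = "\<lambda>z h. H z *v h", OF seg deriv bound x_in])
  then show ?thesis by (simp add: ac_simps)
qed

lemma second_difference_bound:
  fixes f :: "real^'n \<Rightarrow> real" and g :: "real^'n \<Rightarrow> real^'n" and H :: "real^'n \<Rightarrow> real^'n^'n"
  assumes ball: "cball x R \<subseteq> S" and uv: "norm u + norm v \<le> R" and L: "0 \<le> L"
    and grad: "\<And>y. y \<in> S \<Longrightarrow> (f has_derivative (\<lambda>h. g y \<bullet> h)) (at y)"
    and hess: "\<And>y. y \<in> S \<Longrightarrow> (g has_derivative (\<lambda>h. H y *v h)) (at y)"
    and LH: "\<And>y z. y \<in> S \<Longrightarrow> z \<in> S \<Longrightarrow> onorm (\<lambda>v. (H y - H z) *v v) \<le> L * norm (y - z)"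
  shows "\<bar>f (x + u + v) - f (x + u) - f (x + v) + f x - (H x *v v) \<bullet> u\<bar> \<le> L * R * norm v * norm u"
proof -
  define \<phi> where "\<phi> z = f (z + v) - f z - (H x *v v) \<bullet> z" for z
  define \<phi>' where "\<phi>' z = (\<lambda>h. (g (z + v) - g z - H x *v v) \<bullet> h)" for z
  have in_ball: "z \<in> cball x R" "z + v \<in> cball x R" if "z \<in> closed_segment x (x + u)" for z
  proof -
    have "norm (z - x) \<le> norm u" using segment_bound1[OF that] by simp
    moreover have "norm (z + v - x) \<le> norm (z - x) + norm v"
      using norm_triangle_ineq[of "z - x" v] by (simp add: algebra_simps)
    ultimately have "norm (z - x) \<le> R" "norm (z + v - x) \<le> R"
      using uv norm_ge_zero[of v] by linarith+
    then show "z \<in> cball x R" "z + v \<in> cball x R"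
      by (simp_all add: dist_norm norm_minus_commute)
  qed
  have "norm (\<phi> (x + u) - \<phi> x) \<le> (L * R * norm v) * norm (x + u - x)"
  proof (rule differentiable_bound[OF convex_closed_segment])
    fix z assume z: "z \<in> closed_segment x (x + u)"
    then have "z \<in> S" "z + v \<in> S" using in_ball ball by auto
    have shift: "((\<lambda>z. z + v) has_derivative (\<lambda>h. h)) (at z)"
      by (auto intro!: derivative_eq_intros)
    have "(\<phi> has_derivative (\<lambda>h. g (z + v) \<bullet> h - g z \<bullet> h - (H x *v v) \<bullet> h)) (at z)"
      unfolding \<phi>_def
      using has_derivative_compose[OF shift grad[OF \<open>z + v \<in> S\<close>]] grad[OF \<open>z \<in> S\<close>]
      by (intro has_derivative_diff has_derivative_inner_right has_derivative_ident) auto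
    then show "(\<phi> has_derivative \<phi>' z) (at z within closed_segment x (x + u))"
      unfolding \<phi>'_def inner_diff_left by (rule has_derivative_at_withinI)
    have "onorm (\<phi>' z) \<le> norm (g (z + v) - g z - H x *v v) * onorm (\<lambda>h::real^'n. h)"
      unfolding \<phi>'_def by (rule onorm_inner_right[OF bounded_linear_ident])
    also have "\<dots> \<le> norm (g (z + v) - g z - H x *v v)"
      by (rule mult_left_le[OF onorm_id_le norm_ge_zero])
    also have "\<dots> \<le> L * R * norm v"
      using gradient_linearization_bound[OF ball in_ball[OF z] L hess LH] .
    finally show "onorm (\<phi>' z) \<le> L * R * norm v" .
  qed auto
  moreover have "\<phi> (x + u) - \<phi> x = f (x + u + v) - f (x + u) - f (x + v) + f x - (H x *v v) \<bullet> u"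
    by (simp add: \<phi>_def inner_add_right)
  ultimately show ?thesis by (simp add: mult.assoc)
qed

lemma hessian_symmetric:
  fixes f :: "real^'n \<Rightarrow> real" and g :: "real^'n \<Rightarrow> real^'n" and H :: "real^'n \<Rightarrow> real^'n^'n"
  assumes S: "open S" and x: "x \<in> S" and L: "0 \<le> L"
    and grad: "\<And>y. y \<in> S \<Longrightarrow> (f has_derivative (\<lambda>h. g y \<bullet> h)) (at y)"
    and hess: "\<And>y. y \<in> S \<Longrightarrow> (g has_derivative (\<lambda>h. H y *v h)) (at y)"
    and LH: "\<And>y z. y \<in> S \<Longrightarrow> z \<in> S \<Longrightarrow> onorm (\<lambda>v. (H y - H z) *v v) \<le> L * norm (y - z)"
  shows "(H x *v v) \<bullet> u = (H x *v u) \<bullet> v"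
proof -
  \<comment> \<open>The second difference D t is symmetric in u and v and approximates both
    t^2 (H x v) \<bullet> u and t^2 (H x u) \<bullet> v up to O(t^3).\<close>
  obtain r where r: "0 < r" "cball x r \<subseteq> S" using open_contains_cball S x by blast
  define N where "N = norm u + norm v + 1"
  have N: "0 < N" by (simp add: N_def add_nonneg_pos)
  define D where "D t = f (x + t *\<^sub>R u + t *\<^sub>R v) - f (x + t *\<^sub>R u) - f (x + t *\<^sub>R v) + f x" for t
  have "\<bar>(H x *v v) \<bullet> u - (H x *v u) \<bullet> v\<bar> \<le> 0"
  proof (rule le_linear_near_zero_imp_nonpos)
    show "0 < r / N" using r N by simp
    fix t assume t: "0 < t" "t \<le> r / N"
    define R where "R = t * (norm u + norm v)"
    define E where "E = L * R * (t * norm v) * (t * norm u)"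
    have "R \<le> r" using t N by (simp add: R_def N_def field_simps)
    then have ball: "cball x R \<subseteq> S" using r(2) subset_cball by blast
    have uv: "norm (t *\<^sub>R u) + norm (t *\<^sub>R v) \<le> R" "norm (t *\<^sub>R v) + norm (t *\<^sub>R u) \<le> R"
      using t by (simp_all add: R_def algebra_simps)
    have "\<bar>D t - t\<^sup>2 * ((H x *v v) \<bullet> u)\<bar> \<le> E"
      using second_difference_bound[OF ball uv(1) L grad hess LH] t
      by (simp add: D_def E_def power2_eq_square matrix_vector_mult_scaleR)
    moreover have "\<bar>D t - t\<^sup>2 * ((H x *v u) \<bullet> v)\<bar> \<le> E"
      using second_difference_bound[OF ball uv(2) L grad hess LH] t
      by (simp add: D_def E_def power2_eq_square matrix_vector_mult_scaleR add_ac mult_ac)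
    ultimately have "\<bar>t\<^sup>2 * ((H x *v v) \<bullet> u) - t\<^sup>2 * ((H x *v u) \<bullet> v)\<bar> \<le> 2 * E"
      unfolding abs_le_iff by linarith
    then have "t\<^sup>2 * \<bar>(H x *v v) \<bullet> u - (H x *v u) \<bullet> v\<bar> \<le> 2 * E"
      by (simp add: abs_mult right_diff_distrib[symmetric])
    also have "\<dots> \<le> 2 * (L * (t * N) * (t * norm v) * (t * norm u))"
      unfolding E_def using t L by (intro mult_left_mono mult_right_mono) (auto simp: R_def N_def)
    also have "\<dots> = t\<^sup>2 * (2 * L * N * norm u * norm v * t)"
      by (simp add: power2_eq_square)
    finally show "\<bar>(H x *v v) \<bullet> u - (H x *v u) \<bullet> v\<bar> \<le> 2 * L * N * norm u * norm v * t"
      using t by simp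
  qed
  then show ?thesis by simp
qed

section \<open>Symmetric matrices\<close>

lemma quadratic_form_scaleR:
  fixes A :: "real^'n^'n"
  shows "(c *\<^sub>R w) \<bullet> (A *v (c *\<^sub>R w)) = c\<^sup>2 * (w \<bullet> (A *v w))"
  by (simp add: matrix_vector_mult_scaleR power2_eq_square)

lemma psd_quadratic_form_zero_imp_kernel:
  fixes A :: "real^'n^'n"
  assumes sym: "\<And>u v. (A *v v) \<bullet> u = (A *v u) \<bullet> v"
    and psd: "\<And>v. 0 \<le> v \<bullet> (A *v v)"
    and zero: "v \<bullet> (A *v v) = 0"
  shows "A *v v = 0"
proof (rule ccontr)
  define w where "w = A *v v"
  define R where "R = w \<bullet> (A *v w)"
  assume "A *v v \<noteq> 0"
  then have w: "0 < w \<bullet> w" by (simp add: w_def)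
  have R: "0 \<le> R" using psd by (simp add: R_def)
  have expand: "(v + t *\<^sub>R w) \<bullet> (A *v (v + t *\<^sub>R w)) = 2 * t * (w \<bullet> w) + t\<^sup>2 * R" for t
    using sym[of w v] zero
    by (simp add: R_def w_def matrix_vector_right_distrib matrix_vector_mult_scaleR inner_add_left
        inner_add_right inner_commute power2_eq_square algebra_simps)
  define t where "t = - (w \<bullet> w) / (R + 1)"
  have "2 * t * (w \<bullet> w) + t\<^sup>2 * R = - (w \<bullet> w)\<^sup>2 * (R + 2) / (R + 1)\<^sup>2"
    using R by (simp add: t_def divide_simps) (simp add: algebra_simps power2_eq_square)
  also have "\<dots> < 0"
    using R w by (intro divide_neg_pos) (auto intro!: mult_pos_pos)
  finally show False using psd[of "v + t *\<^sub>R w"] expand[of t] by linarith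
qed

lemma eigenvalues_nonempty_if_symmetric:
  fixes A :: "real^'n^'n"
  assumes sym: "\<And>u v. (A *v v) \<bullet> u = (A *v u) \<bullet> v"
  shows "eigenvalues A \<noteq> {}"
proof -
  \<comment> \<open>A minimiser of the Rayleigh quotient on the unit sphere is an eigenvector.\<close>
  define q where "q v = v \<bullet> (A *v v)" for v :: "real^'n"
  have "continuous_on (sphere 0 1) q"
    unfolding q_def by (intro continuous_intros linear_continuous_on matrix_vector_mul_bounded_linear)
  moreover obtain e :: "real^'n" where "norm e = 1" using vector_choose_size[of 1] by auto
  then have "sphere (0::real^'n) 1 \<noteq> {}" by auto
  ultimately obtain v where v: "norm v = 1" and v_min: "\<And>y. norm y = 1 \<Longrightarrow> q v \<le> q y"
    using continuous_attains_inf[OF compact_sphere] by (metis mem_sphere_0)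
  define B where "B = A - q v *\<^sub>R mat 1"
  have B: "B *v y = A *v y - q v *\<^sub>R y" for y
    by (simp add: B_def matrix_vector_mult_diff_rdistrib scaleR_matrix_vector_assoc[symmetric])
  have "B *v v = 0"
  proof (rule psd_quadratic_form_zero_imp_kernel)
    show "(B *v y) \<bullet> u = (B *v u) \<bullet> y" for u y
      using sym[of u y] inner_commute[of y u] by (simp add: B inner_diff_left)
    show "0 \<le> y \<bullet> (B *v y)" for y
    proof (cases "y = 0")
      case False
      have "(norm y)\<^sup>2 * q v \<le> (norm y)\<^sup>2 * q ((1 / norm y) *\<^sub>R y)"
        using False by (intro mult_left_mono v_min) auto
      also have "\<dots> = q y"
        using quadratic_form_scaleR[of "norm y" "(1 / norm y) *\<^sub>R y" A] False by (simp add: q_def)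
      finally have "q v * (norm y)\<^sup>2 \<le> q y" by (simp add: mult.commute)
      then show ?thesis by (simp add: B q_def inner_diff_right power2_norm_eq_inner)
    qed simp
    show "v \<bullet> (B *v v) = 0"
      using v by (simp add: B q_def inner_diff_right power2_norm_eq_inner[symmetric])
  qed
  then have "A *v v = q v *\<^sub>R v" by (simp add: B)
  moreover have "v \<noteq> 0" using v by auto
  ultimately show ?thesis unfolding eigenvalues_def by blast
qed

lemma eigenvalues_finite_if_symmetric:
  fixes A :: "real^'n^'n"
  assumes sym: "\<And>u v. (A *v v) \<bullet> u = (A *v u) \<bullet> v"
  shows "finite (eigenvalues A)"
proof -
  define ev where "ev \<mu> = (SOME v. v \<noteq> 0 \<and> A *v v = \<mu> *\<^sub>R v)" for \<mu>
  have ev: "ev \<mu> \<noteq> 0 \<and> A *v ev \<mu> = \<mu> *\<^sub>R ev \<mu>" if "\<mu> \<in> eigenvalues A" for \<mu>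
    using that someI_ex[of "\<lambda>v. v \<noteq> 0 \<and> A *v v = \<mu> *\<^sub>R v"]
    unfolding eigenvalues_def ev_def by blast
  have "inj_on ev (eigenvalues A)"
  proof (rule inj_onI)
    fix \<mu> \<nu> assume "\<mu> \<in> eigenvalues A" "\<nu> \<in> eigenvalues A" "ev \<mu> = ev \<nu>"
    then have "\<mu> *\<^sub>R ev \<mu> = \<nu> *\<^sub>R ev \<mu>" "ev \<mu> \<noteq> 0" using ev by metis+
    then show "\<mu> = \<nu>" by simp
  qed
  moreover have "pairwise orthogonal (ev ` eigenvalues A)"
  proof (rule pairwiseI, clarify)
    fix \<mu> \<nu> assume \<mu>: "\<mu> \<in> eigenvalues A" and \<nu>: "\<nu> \<in> eigenvalues A" and "ev \<mu> \<noteq> ev \<nu>"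
    then have "\<mu> \<noteq> \<nu>" by blast
    have "\<mu> * (ev \<mu> \<bullet> ev \<nu>) = (A *v ev \<mu>) \<bullet> ev \<nu>" using ev[OF \<mu>] by simp
    also have "\<dots> = (A *v ev \<nu>) \<bullet> ev \<mu>" by (rule sym)
    also have "\<dots> = \<nu> * (ev \<mu> \<bullet> ev \<nu>)" using ev[OF \<nu>] by (simp add: inner_commute)
    finally show "orthogonal (ev \<mu>) (ev \<nu>)"
      using \<open>\<mu> \<noteq> \<nu>\<close> by (simp add: orthogonal_def)
  qed
  moreover have "0 \<notin> ev ` eigenvalues A" using ev by auto
  ultimately show ?thesis
    using independent_imp_finite pairwise_orthogonal_independent finite_imageD by blast
qed

text \<open>Symmetry makes the spectrum finite and nonempty, so that the Min in lambda_min is not a junk value.\<close>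

lemma lambda_min_ge_if_symmetric:
  fixes A :: "real^'n^'n"
  assumes sym: "\<And>u v. (A *v v) \<bullet> u = (A *v u) \<bullet> v"
    and form: "\<And>v. c * (v \<bullet> v) \<le> v \<bullet> (A *v v)"
  shows "c \<le> lambda_min A"
  unfolding lambda_min_def
proof (subst Min_ge_iff[OF eigenvalues_finite_if_symmetric[OF sym] eigenvalues_nonempty_if_symmetric[OF sym]],
    intro ballI)
  fix \<mu> assume "\<mu> \<in> eigenvalues A"
  then obtain v where v: "v \<noteq> 0" "A *v v = \<mu> *\<^sub>R v" unfolding eigenvalues_def by auto
  then have "c * (v \<bullet> v) \<le> \<mu> * (v \<bullet> v)" using form[of v] by simp
  then show "c \<le> \<mu>" using v by simp
qed

lemma min_at_zero_necessary_conditions: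
  fixes G :: "'a::real_inner" and q :: "'a \<Rightarrow> real"
  assumes \<delta>: "0 < \<delta>"
    and hom: "\<And>c w. q (c *\<^sub>R w) = c\<^sup>2 * q w"
    and nonneg: "\<And>w. norm w \<le> \<delta> \<Longrightarrow> 0 \<le> G \<bullet> w + q w"
  shows "G = 0" and "0 \<le> q v"
proof -
  have "(norm G)\<^sup>2 \<le> 0"
  proof (rule le_linear_near_zero_imp_nonpos)
    show "0 < \<delta> / (norm G + 1)" using \<delta> by (intro divide_pos_pos) (auto simp: add_nonneg_pos)
    fix t assume t: "0 < t" "t \<le> \<delta> / (norm G + 1)"
    then have "t * norm G \<le> \<delta>"
      by (smt (verit) divide_pos_pos le_divide_eq mult_left_mono norm_ge_zero)
    then have "0 \<le> G \<bullet> ((- t) *\<^sub>R G) + q ((- t) *\<^sub>R G)"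
      using t by (intro nonneg) simp
    moreover have "G \<bullet> ((- t) *\<^sub>R G) = - (t * (norm G)\<^sup>2)"
      by (simp add: power2_norm_eq_inner)
    moreover have "q ((- t) *\<^sub>R G) = t * (q G * t)"
      using hom[of "- t" G] by (simp add: power2_eq_square mult_ac)
    ultimately have "t * (norm G)\<^sup>2 \<le> t * (q G * t)"
      by linarith
    then show "(norm G)\<^sup>2 \<le> q G * t" using t by simp
  qed
  then show G: "G = 0" by simp
  show "0 \<le> q v"
  proof (cases "v = 0")
    case True
    then show ?thesis using hom[of 0 v] by simp
  next
    case False
    have "0 \<le> q ((\<delta> / norm v) *\<^sub>R v)"
      using nonneg[of "(\<delta> / norm v) *\<^sub>R v"] \<delta> False G by simp
    then show ?thesis
      using \<delta> False by (simp add: hom zero_le_mult_iff)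
  qed
qed

section \<open>The trust-region iteration\<close>

definition tr_subproblem_solution ::
  "(real^'n \<Rightarrow> real) \<Rightarrow> (real^'n \<Rightarrow> real^'n) \<Rightarrow> (real^'n \<Rightarrow> real^'n^'n)
     \<Rightarrow> real \<Rightarrow> real^'n \<Rightarrow> real \<Rightarrow> real^'n \<Rightarrow> bool" where
  "tr_subproblem_solution f g H eps_H y \<delta> s \<longleftrightarrow>
     norm s \<le> \<delta> \<and>
     (\<forall>s'. norm s' \<le> \<delta> \<longrightarrow>
        tr_model f g H y (y + s) + (1/2) * eps_H * (norm s)\<^sup>2
          \<le> tr_model f g H y (y + s') + (1/2) * eps_H * (norm s')\<^sup>2)"

lemma tr_model_at_center [simp]: "tr_model f g H y y = f y"
  by (simp add: tr_model_def)

lemma tr_model_step [simp]: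
  "tr_model f g H y (y + w) = f y + g y \<bullet> w + (1/2) * (w \<bullet> (H y *v w))"
  by (simp add: tr_model_def)

lemma tr_subproblem_solution_decrease:
  assumes "tr_subproblem_solution f g H eps_H y \<delta> s"
  shows "(1/2) * eps_H * (norm s)\<^sup>2 \<le> tr_model f g H y y - tr_model f g H y (y + s)"
proof -
  have "norm s \<le> \<delta>" and opt: "\<And>s'. norm s' \<le> \<delta> \<Longrightarrow>
      tr_model f g H y (y + s) + (1/2) * eps_H * (norm s)\<^sup>2
        \<le> tr_model f g H y (y + s') + (1/2) * eps_H * (norm s')\<^sup>2"
    using assms unfolding tr_subproblem_solution_def by blast+
  then have "norm (0::real^'n) \<le> \<delta>" by (metis norm_zero norm_ge_zero order_trans)
  from opt[OF this] show ?thesis by simp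
qed

lemma tr_subproblem_solution_nonzero:
  assumes sol: "tr_subproblem_solution f g H eps_H y \<delta> s" and \<delta>: "0 < \<delta>" and eps_g: "0 < eps_g"
    and sym: "\<And>u v. (H y *v v) \<bullet> u = (H y *v u) \<bullet> v"
    and no_stop: "\<not> tr_stop g H eps_g eps_H y"
  shows "s \<noteq> 0"
proof
  assume "s = 0"
  define q where "q w = (1/2) * (w \<bullet> (H y *v w)) + (1/2) * eps_H * (w \<bullet> w)" for w
  have hom: "q (c *\<^sub>R w) = c\<^sup>2 * q w" for c w
    by (simp add: q_def quadratic_form_scaleR power2_eq_square algebra_simps)
  have nonneg: "0 \<le> g y \<bullet> w + q w" if "norm w \<le> \<delta>" for w
  proof -
    have "tr_model f g H y (y + s) + (1/2) * eps_H * (norm s)\<^sup>2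
        \<le> tr_model f g H y (y + w) + (1/2) * eps_H * (norm w)\<^sup>2"
      using sol that unfolding tr_subproblem_solution_def by blast
    then show ?thesis using \<open>s = 0\<close> by (simp add: q_def power2_norm_eq_inner)
  qed
  have "g y = 0" by (rule min_at_zero_necessary_conditions(1)[OF \<delta> hom nonneg])
  moreover have "- eps_H \<le> lambda_min (H y)"
  proof (rule lambda_min_ge_if_symmetric[OF sym])
    fix v
    show "- eps_H * (v \<bullet> v) \<le> v \<bullet> (H y *v v)"
      using min_at_zero_necessary_conditions(2)[OF \<delta> hom nonneg, of v] by (simp add: q_def)
  qed
  ultimately show False
    using no_stop eps_g by (simp add: tr_stop_def)
qed

lemma rho_below_eta_imp_step_large:
  fixes P D n eps L \<eta> :: real
  assumes "0 < n" "0 < eps" "0 < L" "\<eta> < 1"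
    and pred: "(1/2) * eps * n\<^sup>2 \<le> P" and actual: "P - L / 6 * n ^ 3 \<le> D" and rho: "D / P < \<eta>"
  shows "3 * (1 - \<eta>) * eps / L < n"
proof (rule ccontr)
  assume "\<not> ?thesis"
  then have "n * L \<le> 3 * (1 - \<eta>) * eps" using assms(3) by (simp add: field_simps)
  have "0 < (1/2) * eps * n\<^sup>2" using assms(1,2) by simp
  then have P: "0 < P" using pred by linarith
  have "L / 6 * n ^ 3 = (n * L) * n\<^sup>2 / 6" by (simp add: power2_eq_square power3_eq_cube)
  also have "\<dots> \<le> (3 * (1 - \<eta>) * eps) * n\<^sup>2 / 6"
    using \<open>n * L \<le> _\<close> by (intro divide_right_mono mult_right_mono) auto
  also have "\<dots> = (1 - \<eta>) * ((1/2) * eps * n\<^sup>2)" by simp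
  also have "\<dots> \<le> (1 - \<eta>) * P" using pred assms(4) by (intro mult_left_mono) auto
  finally have "\<eta> * P \<le> D" using actual by (simp add: algebra_simps)
  then show False using rho P by (simp add: field_simps)
qed

lemma tr_unsuccessful_step_large:
  fixes f :: "real^'n \<Rightarrow> real" and g :: "real^'n \<Rightarrow> real^'n" and H :: "real^'n \<Rightarrow> real^'n^'n"
  assumes sol: "tr_subproblem_solution f g H eps_H y \<delta> s" and \<delta>: "0 < \<delta>"
    and eps_g: "0 < eps_g" and eps_H: "0 < eps_H" and no_stop: "\<not> tr_stop g H eps_g eps_H y"
    and S: "open S" and seg: "closed_segment y (y + s) \<subseteq> S"
    and grad: "\<And>z. z \<in> S \<Longrightarrow> (f has_derivative (\<lambda>h. g z \<bullet> h)) (at z)"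
    and hess: "\<And>z. z \<in> S \<Longrightarrow> (g has_derivative (\<lambda>h. H z *v h)) (at z)"
    and L: "0 < L" and LH: "\<And>z w. z \<in> S \<Longrightarrow> w \<in> S \<Longrightarrow> onorm (\<lambda>v. (H z - H w) *v v) \<le> L * norm (z - w)"
    and \<eta>: "\<eta> < 1" and \<rho>: "tr_rho f g H y s < \<eta>"
  shows "3 * (1 - \<eta>) * eps_H / L < norm s"
proof (rule rho_below_eta_imp_step_large[OF _ eps_H L \<eta> tr_subproblem_solution_decrease[OF sol]])
  have "y \<in> S" using seg by auto
  then have "s \<noteq> 0"
    using tr_subproblem_solution_nonzero[OF sol \<delta> eps_g _ no_stop] hessian_symmetric[OF S _ _ grad hess LH] L
    by simp
  then show "0 < norm s" by simp
  show "tr_model f g H y y - tr_model f g H y (y + s) - L / 6 * norm s ^ 3 \<le> f y - f (y + s)"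
    using cubic_taylor_upper_bound[OF seg grad hess LH] by simp
  show "(f y - f (y + s)) / (tr_model f g H y y - tr_model f g H y (y + s)) < \<eta>"
    using \<rho> unfolding tr_rho_def .
qed

lemma tr_radius_lower_bound:
  fixes \<delta> \<rho> :: "nat \<Rightarrow> real" and s :: "nat \<Rightarrow> 'a::real_normed_vector"
  assumes K_down: "\<And>k. Suc k \<in> K \<Longrightarrow> k \<in> K"
    and d: "0 < d" "d \<le> \<delta> 0" "d \<le> \<delta>max" and \<gamma>2: "1 \<le> \<gamma>2"
    and succ: "\<And>k. k \<in> K \<Longrightarrow> \<eta> \<le> \<rho> k \<Longrightarrow>
        \<delta> (Suc k) = (if \<psi> * \<delta> k \<le> norm (s k) then min (\<gamma>2 * \<delta> k) \<delta>max else \<delta> k)"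
    and unsucc: "\<And>k. k \<in> K \<Longrightarrow> \<rho> k < \<eta> \<Longrightarrow> \<delta> (Suc k) = \<gamma>1 * norm (s k)"
    and large: "\<And>k. k \<in> K \<Longrightarrow> 0 < \<delta> k \<Longrightarrow> \<rho> k < \<eta> \<Longrightarrow> d \<le> \<gamma>1 * norm (s k)"
  shows "k \<in> K \<Longrightarrow> d \<le> \<delta> k"
proof (induction k)
  case 0
  show ?case by (rule d(2))
next
  case (Suc k)
  then have k: "k \<in> K" and IH: "d \<le> \<delta> k" by (auto intro: K_down)
  show ?case
  proof (cases "\<eta> \<le> \<rho> k")
    case True
    have "\<delta> k \<le> \<gamma>2 * \<delta> k" using \<gamma>2 IH d(1) by simp
    then show ?thesis using succ[OF k True] IH d(3) by auto
  next
    case False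
    then show ?thesis using unsucc[OF k] large[OF k] IH d(1) by auto
  qed
qed

theorem lemma2p2:
  fixes f :: "real^'n \<Rightarrow> real"
    and g :: "real^'n \<Rightarrow> real^'n"
    and H :: "real^'n \<Rightarrow> real^'n^'n"
    and x s :: "nat \<Rightarrow> real^'n"
    and \<delta> :: "nat \<Rightarrow> real"
    and eps_g eps_H \<gamma>1 \<gamma>2 \<psi> \<delta>0 \<delta>max \<eta> f_low L_g L_H :: real
    and S :: "(real^'n) set"
  assumes eps_g: "eps_g > 0" and eps_H: "eps_H > 0"
    and gamma1: "0 < \<gamma>1" "\<gamma>1 < 1"
    and gamma2: "\<gamma>2 \<ge> 1"
    and psi: "1 / \<gamma>2 < \<psi>" "\<psi> \<le> 1"
    and delta0: "\<delta>0 > 0" "\<delta>max \<ge> \<delta>0" "\<delta> 0 = \<delta>0"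
    and eta: "0 < \<eta>" "\<eta> < 1"
    (* the subproblem: s_k is a global solution of the regularized trust-region subproblem *)
    and step: "\<And>k. k \<in> tr_K g H eps_g eps_H x \<Longrightarrow>
        norm (s k) \<le> \<delta> k \<and>
        (\<forall>s'. norm s' \<le> \<delta> k \<longrightarrow>
           tr_model f g H (x k) (x k + s k) + (1/2) * eps_H * (norm (s k))\<^sup>2
             \<le> tr_model f g H (x k) (x k + s') + (1/2) * eps_H * (norm s')\<^sup>2)"
    (* successful iterations *)
    and succ: "\<And>k. k \<in> tr_K g H eps_g eps_H x \<Longrightarrow> tr_rho f g H (x k) (s k) \<ge> \<eta> \<Longrightarrow>
        x (Suc k) = x k + s k \<and>
        \<delta> (Suc k) = (if norm (s k) \<ge> \<psi> * \<delta> k then min (\<gamma>2 * \<delta> k) \<delta>max else \<delta> k)"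
    (* unsuccessful iterations *)
    and unsucc: "\<And>k. k \<in> tr_K g H eps_g eps_H x \<Longrightarrow> tr_rho f g H (x k) (s k) < \<eta> \<Longrightarrow>
        x (Suc k) = x k \<and> \<delta> (Suc k) = \<gamma>1 * norm (s k)"
    (* standing assumption *)
    and f_low: "\<And>k. f (x k) \<ge> f_low"
    and S_open: "open S"
    and segs: "\<And>k. k \<in> tr_K g H eps_g eps_H x \<Longrightarrow> closed_segment (x k) (x k + s k) \<subseteq> S"
    and grad: "\<And>y. y \<in> S \<Longrightarrow> (f has_derivative (\<lambda>h. g y \<bullet> h)) (at y)"
    and hess: "\<And>y. y \<in> S \<Longrightarrow> (g has_derivative (\<lambda>h. H y *v h)) (at y)"
    and hess_cont: "continuous_on S H"
    and Lg: "L_g > 0" "\<And>y z. y \<in> S \<Longrightarrow> z \<in> S \<Longrightarrow> norm (g y - g z) \<le> L_g * norm (y - z)"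
    and LH: "L_H > 0" "\<And>y z. y \<in> S \<Longrightarrow> z \<in> S \<Longrightarrow>
        onorm (\<lambda>v. (H y - H z) *v v) \<le> L_H * norm (y - z)"
  shows "(\<forall>k \<in> tr_K g H eps_g eps_H x.
            tr_rho f g H (x k) (s k) < \<eta> \<longrightarrow> \<delta> k > 3 * (1 - \<eta>) * eps_H / L_H)
       \<and> 0 < min \<delta>0 (3 * \<gamma>1 * (1 - \<eta>) / L_H * eps_H)
       \<and> (\<forall>k \<in> tr_K g H eps_g eps_H x. \<delta> k \<ge> min \<delta>0 (3 * \<gamma>1 * (1 - \<eta>) / L_H * eps_H))"
proof -
  let ?K = "tr_K g H eps_g eps_H x"
  let ?\<rho> = "\<lambda>k. tr_rho f g H (x k) (s k)"
  define \<delta>min where "\<delta>min = min \<delta>0 (3 * \<gamma>1 * (1 - \<eta>) / L_H * eps_H)"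
  have \<delta>min_pos: "0 < \<delta>min"
    using delta0 gamma1 eta LH(1) eps_H by (simp add: \<delta>min_def)
  have large: "3 * (1 - \<eta>) * eps_H / L_H < norm (s k)"
    if k: "k \<in> ?K" and \<delta>: "0 < \<delta> k" and \<rho>: "?\<rho> k < \<eta>" for k
  proof (rule tr_unsuccessful_step_large[OF _ \<delta> eps_g eps_H _ S_open segs[OF k] grad hess LH eta(2) \<rho>])
    show "tr_subproblem_solution f g H eps_H (x k) (\<delta> k) (s k)"
      using step[OF k] unfolding tr_subproblem_solution_def .
    show "\<not> tr_stop g H eps_g eps_H (x k)" using k by (simp add: tr_K_def)
  qed
  have \<delta>min_le_step: "\<delta>min \<le> \<gamma>1 * norm (s k)" if "k \<in> ?K" "0 < \<delta> k" "?\<rho> k < \<eta>" for k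
  proof -
    have "\<delta>min \<le> \<gamma>1 * (3 * (1 - \<eta>) * eps_H / L_H)"
      unfolding \<delta>min_def by (rule min.coboundedI2) (simp add: algebra_simps)
    also have "\<dots> \<le> \<gamma>1 * norm (s k)"
      using large[OF that] gamma1 by (intro mult_left_mono) auto
    finally show ?thesis .
  qed
  have lower: "\<delta>min \<le> \<delta> k" if "k \<in> ?K" for k
    by (rule tr_radius_lower_bound[of ?K _ _ \<delta>max \<gamma>2 \<eta> ?\<rho> \<psi> s \<gamma>1,
          OF _ \<delta>min_pos _ _ gamma2 _ _ \<delta>min_le_step that])
      (use delta0 succ unsucc in \<open>auto simp: \<delta>min_def tr_K_def\<close>)
  have "3 * (1 - \<eta>) * eps_H / L_H < \<delta> k" if "k \<in> ?K" "?\<rho> k < \<eta>" for k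
    using large[OF that(1) _ that(2)] lower[OF that(1)] \<delta>min_pos step[OF that(1)] by force
  then show ?thesis using lower \<delta>min_pos by (simp add: \<delta>min_def)
qed

end
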